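(* Let $K\subseteq L$ be real closed fields, and $C$ a positive Dedekind cut in $L$ which is not additive. Let $C'$ and $C'_{\mathrm{add}}$ be the cuts induced on $K$ by $C$ and $C_{\mathrm{add}}$ respectively, i.e. $C'=(C^-\cap K,C^+\cap K)$ and $C'_{\mathrm{add}}=((C_{\mathrm{add}})^-\cap K,(C_{\mathrm{add}})^+\cap K)$. Suppose that $C'_{\mathrm{add}}=(C')_{\mathrm{add}}$, and that $x,y\in L$ are two realizations of the cut $C'$ of $K$, with $x\in C^-$ and $y\in C^+$. Then $y-x$ induces the cut $C'_{\mathrm{add}}$ on $K$; that is, $(C'_{\mathrm{add}})^-=\{a\in K:a<y-x\}$ and $(C'_{\mathrm{add}})^+=\{a\in K: a\ge y-x\}$.
   Context: A cut of an ordered field $F$ is a pair $C=(C^-,C^+)$ with $F=C^-\cup C^+$ disjoint and $C^-<C^+$. It is a Dedekind cut if both sides are nonempty, $C^-$ has no maximum and $C^+$ has no minimum. It is positive if $C^-$ contains a positive element. It is additive if $C^-$ is closed under addition and contains some positive element. For a cut $C$ of $F$, $C_{\mathrm{add}}$ is the cut of $F$ with left side $\{r\in F: r+C^-\subseteq C^-\}$ (right side the complement). An element $a$ of an extension field realizes a cut $D$ of $K$ if $D^-=\{c\in K:c<a\}$ and $D^+=\{c\in K:c>a\}$. *)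

theory Defs
  imports "HOL-Computational_Algebra.Polynomial"
begin

definition subfield :: "'a::linordered_field set \<Rightarrow> bool" where
  "subfield K \<longleftrightarrow> 0 \<in> K \<and> 1 \<in> K \<and>
     (\<forall>a\<in>K. \<forall>b\<in>K. a + b \<in> K \<and> a - b \<in> K \<and> a * b \<in> K) \<and>
     (\<forall>a\<in>K. inverse a \<in> K)"

definition real_closed_in :: "'a::linordered_field set \<Rightarrow> bool" where
  "real_closed_in K \<longleftrightarrow> subfield K \<and>
     (\<forall>a\<in>K. a > 0 \<longrightarrow> (\<exists>b\<in>K. b * b = a)) \<and>
     (\<forall>p::'a poly. (\<forall>i. coeff p i \<in> K) \<and> odd (degree p) \<longrightarrow> (\<exists>r\<in>K. poly p r = 0))"

definition is_cut :: "'a::linordered_field set \<Rightarrow> 'a set \<times> 'a set \<Rightarrow> bool" where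
  "is_cut F C \<longleftrightarrow> fst C \<union> snd C = F \<and> fst C \<inter> snd C = {} \<and>
     (\<forall>a\<in>fst C. \<forall>b\<in>snd C. a < b)"

definition dedekind_cut :: "'a::linordered_field set \<Rightarrow> 'a set \<times> 'a set \<Rightarrow> bool" where
  "dedekind_cut F C \<longleftrightarrow> is_cut F C \<and> fst C \<noteq> {} \<and> snd C \<noteq> {} \<and>
     (\<forall>a\<in>fst C. \<exists>b\<in>fst C. a < b) \<and> (\<forall>a\<in>snd C. \<exists>b\<in>snd C. b < a)"

definition positive_cut :: "'a::linordered_field set \<times> 'a set \<Rightarrow> bool" where
  "positive_cut C \<longleftrightarrow> (\<exists>a\<in>fst C. a > 0)"

definition additive_cut :: "'a::linordered_field set \<times> 'a set \<Rightarrow> bool" where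
  "additive_cut C \<longleftrightarrow> (\<forall>a\<in>fst C. \<forall>b\<in>fst C. a + b \<in> fst C) \<and> (\<exists>a\<in>fst C. a > 0)"

definition cut_add :: "'a::linordered_field set \<Rightarrow> 'a set \<times> 'a set \<Rightarrow> 'a set \<times> 'a set" where
  "cut_add F C = ({r\<in>F. \<forall>c\<in>fst C. r + c \<in> fst C}, F - {r\<in>F. \<forall>c\<in>fst C. r + c \<in> fst C})"

definition restrict_cut :: "'a set \<Rightarrow> 'a set \<times> 'a set \<Rightarrow> 'a set \<times> 'a set" where
  "restrict_cut K C = (fst C \<inter> K, snd C \<inter> K)"

definition realizes :: "'a::linordered_field set \<Rightarrow> 'a \<Rightarrow> 'a set \<times> 'a set \<Rightarrow> bool" where
  "realizes K a D \<longleftrightarrow> fst D = {c\<in>K. c < a} \<and> snd D = {c\<in>K. c > a}"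

end

theory Submission
  imports Defs
begin

text \<open>Every \<open>a \<in> K\<close> with \<open>a < y - x\<close> shifts the left side of the induced cut into itself,
  since \<open>c < x\<close> gives \<open>a + c < y\<close> and \<open>y\<close> realizes the same cut as \<open>x\<close>. Conversely,
  an \<open>a\<close> in the left side of \<open>C\<^sub>a\<^sub>d\<^sub>d\<close> moves \<open>x \<in> C\<^sup>-\<close> to \<open>a + x \<in> C\<^sup>-\<close>, hence below
  \<open>y \<in> C\<^sup>+\<close>. The hypothesis \<open>C'\<^sub>a\<^sub>d\<^sub>d = (C')\<^sub>a\<^sub>d\<^sub>d\<close> glues the two inclusions together.\<close>

lemma subfield_add_closed:
  assumes "subfield K" "a \<in> K" "b \<in> K"
  shows "a + b \<in> K"
  using assms unfolding subfield_def by blast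

lemma cut_add_less_diff:
  assumes "is_cut F C" "a \<in> fst (cut_add F C)" "x \<in> fst C" "y \<in> snd C"
  shows "a < y - x"
proof -
  have "a + x \<in> fst C"
    using assms(2,3) unfolding cut_add_def by auto
  then have "a + x < y"
    using assms(1,4) unfolding is_cut_def by blast
  then show ?thesis
    by (simp add: algebra_simps)
qed

lemma less_diff_in_cut_add_realized:
  assumes "subfield K" "realizes K x D" "realizes K y D"
  shows "{a\<in>K. a < y - x} \<subseteq> fst (cut_add K D)"
proof
  fix a assume "a \<in> {a\<in>K. a < y - x}"
  then have aK: "a \<in> K" and a_less: "a < y - x"
    by auto
  have "a + c \<in> fst D" if "c \<in> fst D" for c
  proof -
    have "c \<in> K" "c < x"
      using that assms(2) unfolding realizes_def by auto
    then have "a + c \<in> K" "a + c < y"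
      using subfield_add_closed[OF assms(1) aK] a_less by (auto simp: less_diff_eq)
    then show ?thesis
      using assms(3) unfolding realizes_def by simp
  qed
  then show "a \<in> fst (cut_add K D)"
    using aK unfolding cut_add_def by simp
qed

lemma snd_restrict_cut_add:
  assumes "K \<subseteq> F"
  shows "snd (restrict_cut K (cut_add F C)) = K - fst (restrict_cut K (cut_add F C))"
  using assms unfolding restrict_cut_def cut_add_def by auto

theorem lemma2p11:
  fixes K :: "'a::linordered_field set" and C :: "'a set \<times> 'a set" and x y :: 'a
  assumes "real_closed_in (UNIV :: 'a set)"
    and "real_closed_in K"
    and "dedekind_cut UNIV C"
    and "positive_cut C"
    and "\<not> additive_cut C"
    and "restrict_cut K (cut_add UNIV C) = cut_add K (restrict_cut K C)"
    and "realizes K x (restrict_cut K C)"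
    and "realizes K y (restrict_cut K C)"
    and "x \<in> fst C" and "y \<in> snd C"
  shows "fst (restrict_cut K (cut_add UNIV C)) = {a\<in>K. a < y - x} \<and>
         snd (restrict_cut K (cut_add UNIV C)) = {a\<in>K. a \<ge> y - x}"
proof -
  have "is_cut UNIV C"
    using assms(3) unfolding dedekind_cut_def by blast
  then have "fst (restrict_cut K (cut_add UNIV C)) \<subseteq> {a\<in>K. a < y - x}"
    using cut_add_less_diff[of UNIV C _ x y] assms(9,10) unfolding restrict_cut_def by auto
  moreover have "{a\<in>K. a < y - x} \<subseteq> fst (restrict_cut K (cut_add UNIV C))"
    using less_diff_in_cut_add_realized assms(2,6-8) unfolding real_closed_in_def by metis
  ultimately have "fst (restrict_cut K (cut_add UNIV C)) = {a\<in>K. a < y - x}"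
    by (rule antisym)
  then show ?thesis
    using snd_restrict_cut_add[of K UNIV C] by auto
qed

end
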